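(* Let $b>1$, $\gamma>0$ and $x_0\ge e$ be constants, and let $\zeta$ be a random variable whose tail function satisfies $$T_\zeta(x)=x^{-b}(\ln x)^{\gamma}\qquad\text{for all } x\ge x_0.$$ Then $|\zeta|_p\asymp (b-p)^{-(\gamma+1)/b}$ for $p\in[1,b)$ (i.e. the ratio of the two sides is bounded above and below by positive finite constants on $[1,b)$). Consequently $\zeta$ belongs to the space $G\psi^{b,\gamma+1}$, but $\|\zeta\|G\psi^{b,\gamma}=\infty$, where $\psi^{b,\delta}(p)=(b-p)^{-\delta/b}$, $p\in[1,b)$.
   Context: All random variables are defined on a probability space $(\Omega,F,\mathbf P)$. For $p\ge 1$, $|f|_p=(\mathbf E|f|^p)^{1/p}$. Given a positive continuous function $\psi$ on $[1,b)$, the Grand Lebesgue Space $G\psi$ consists of all random variables $f$ with finite norm $\|f\|G\psi=\sup_{p\in[1,b)}|f|_p/\psi(p)$. The tail function of a random variable $\xi$ is $T_\xi(x)=\max(\mathbf P(\xi\ge x),\mathbf P(\xi\le -x))$, $x\ge0$. *)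

theory Defs
  imports "HOL-Probability.Probability"
begin

definition lp_norm :: "'a measure \<Rightarrow> real \<Rightarrow> ('a \<Rightarrow> real) \<Rightarrow> ennreal" where
  "lp_norm M p f =
     (let m = (\<integral>\<^sup>+ \<omega>. ennreal (\<bar>f \<omega>\<bar> powr p) \<partial>M)
      in if m = \<top> then \<top> else ennreal (enn2real m powr (1 / p)))"

definition gls_norm :: "'a measure \<Rightarrow> real \<Rightarrow> (real \<Rightarrow> real) \<Rightarrow> ('a \<Rightarrow> real) \<Rightarrow> ennreal" where
  "gls_norm M b \<psi> f = (SUP p\<in>{1..<b}. lp_norm M p f / ennreal (\<psi> p))"

definition gls_space :: "'a measure \<Rightarrow> real \<Rightarrow> (real \<Rightarrow> real) \<Rightarrow> ('a \<Rightarrow> real) set" where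
  "gls_space M b \<psi> = {f. f \<in> borel_measurable M \<and> gls_norm M b \<psi> f < \<top>}"

definition psi_bd :: "real \<Rightarrow> real \<Rightarrow> real \<Rightarrow> real" where
  "psi_bd b \<delta> p = (b - p) powr (- \<delta> / b)"

definition tail_fun :: "'a measure \<Rightarrow> ('a \<Rightarrow> real) \<Rightarrow> real \<Rightarrow> real" where
  "tail_fun M \<xi> x = max (measure M {\<omega>\<in>space M. \<xi> \<omega> \<ge> x}) (measure M {\<omega>\<in>space M. \<xi> \<omega> \<le> - x})"

end

theory Submission
  imports Defs
begin

(* Cut the sample space into the layers e^k <= |zeta|.  Beyond ln x0 the tail hypothesis gives
   P(|zeta| >= e^k) ~ e^(-b k) k^gamma, so with s = b - p the moment E|zeta|^p is comparable to
   sum_k e^(-s k) k^gamma, which is of order s^(-(gamma+1)): above, k^gamma e^(-s k/2) <= (2 gamma/s)^gamma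
   leaves a geometric series of ratio e^(-s/2); below, the N layers with N <= k < 2N and N ~ 1/s each
   contribute at least e^(-2 s N) N^gamma.  Taking p-th roots changes the exponent (gamma+1)/p into
   (gamma+1)/b only up to the factor s^(-(gamma+1)(1/p - 1/b)), which is bounded because s |ln s| is.
   Hence |zeta|_p / psi^(b,gamma+1)(p) stays bounded while |zeta|_p / psi^(b,gamma)(p) grows like
   (b - p)^(-1/b). *)

lemma sum_layer_increments_le_powr:
  fixes x p :: real
  assumes "p > 0" "x \<ge> 0"
  shows "(\<Sum>k\<in>{m..<n}. if exp (real k) \<le> x then exp (real k * p) - exp ((real k - 1) * p) else 0)
           \<le> x powr p"
proof (induction n)
  case 0
  then show ?case by simp
next
  case (Suc n)
  show ?case
  proof (cases "n < m")
    case True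
    then show ?thesis by simp
  next
    case False
    then have split: "{m..<Suc n} = insert n {m..<n}" by auto
    show ?thesis
    proof (cases "exp (real n) \<le> x")
      case True
      have "(\<Sum>k\<in>{m..<Suc n}. if exp (real k) \<le> x then exp (real k * p) - exp ((real k - 1) * p) else 0)
          = (\<Sum>k\<in>{m..<Suc n}. exp ((real (Suc k) - 1) * p) - exp ((real k - 1) * p))"
      proof (rule sum.cong)
        fix k assume "k \<in> {m..<Suc n}"
        then have "exp (real k) \<le> exp (real n)" by simp
        then have "exp (real k) \<le> x" using True by linarith
        then show "(if exp (real k) \<le> x then exp (real k * p) - exp ((real k - 1) * p) else 0)
          = exp ((real (Suc k) - 1) * p) - exp ((real k - 1) * p)" by simp
      qed simp
      also have "\<dots> = exp (real n * p) - exp ((real m - 1) * p)"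
        using sum_Suc_diff'[of m "Suc n" "\<lambda>k. exp ((real k - 1) * p)"] False by simp
      also have "\<dots> \<le> exp (real n) powr p" by (simp add: powr_def mult.commute)
      also have "\<dots> \<le> x powr p" using True assms by (simp add: powr_mono2)
      finally show ?thesis .
    next
      case False
      then show ?thesis using Suc split by simp
    qed
  qed
qed

lemma powr_le_sum_layer_increments:
  fixes x p :: real
  assumes "p > 0" "x \<ge> 0" "x < exp (real (K + d))"
  shows "x powr p \<le> exp (real K * p)
           + (\<Sum>k\<in>{K..<K+d}. if exp (real k) \<le> x then exp ((real k + 1) * p) - exp (real k * p) else 0)"
  using assms(3)
proof (induction d)
  case 0
  have "x powr p \<le> exp (real K) powr p" using 0 assms by (intro powr_mono2) auto
  then show ?case by (simp add: powr_def mult.commute)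
next
  case (Suc d)
  have split: "{K..<K + Suc d} = insert (K + d) {K..<K + d}" by auto
  show ?case
  proof (cases "x < exp (real (K + d))")
    case True
    then show ?thesis using Suc split assms(1) by simp
  next
    case False
    have "(\<Sum>k\<in>{K..<K+Suc d}. if exp (real k) \<le> x then exp ((real k + 1) * p) - exp (real k * p) else 0)
        = (\<Sum>k\<in>{K..<K+Suc d}. exp (real (Suc k) * p) - exp (real k * p))"
    proof (rule sum.cong)
      fix k assume "k \<in> {K..<K+Suc d}"
      then have "exp (real k) \<le> exp (real (K + d))" by simp
      then have "exp (real k) \<le> x" using False by linarith
      then show "(if exp (real k) \<le> x then exp ((real k + 1) * p) - exp (real k * p) else 0)
          = exp (real (Suc k) * p) - exp (real k * p)" by (simp add: add.commute)
    qed simp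
    also have "\<dots> = exp (real (K + Suc d) * p) - exp (real K * p)"
      using sum_Suc_diff'[of K "K + Suc d" "\<lambda>k. exp (real k * p)"] by simp
    also have "exp (real (K + Suc d) * p) = exp (real (K + Suc d)) powr p"
      by (simp add: powr_def mult.commute)
    also have "x powr p \<le> \<dots>" using Suc.prems assms by (intro powr_mono2) auto
    ultimately show ?thesis by simp
  qed
qed

lemma powr_mult_exp_le:
  fixes t a g :: real
  assumes "t > 0" "a > 0" "g > 0"
  shows "t powr g * exp (- a * t) \<le> (g / a) powr g"
proof -
  have "ln (a * t / g) \<le> a * t / g - 1" using assms by (intro ln_le_minus_one) auto
  moreover have "ln (a * t / g) = ln t - ln (g / a)" using assms by (simp add: ln_div ln_mult)
  ultimately have "g * (ln t - ln (g / a)) \<le> g * (a * t / g)" using assms by (intro mult_left_mono) auto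
  then have "g * ln t - a * t \<le> g * ln (g / a)" using assms by (simp add: algebra_simps)
  then have "exp (g * ln t - a * t) \<le> exp (g * ln (g / a))" by simp
  then show ?thesis using assms by (simp add: powr_def exp_diff exp_minus divide_inverse)
qed

lemma one_minus_exp_minus_ge:
  fixes s :: real
  assumes "s > 0"
  shows "s / (1 + s) \<le> 1 - exp (- s)"
proof -
  have "exp (- s) = inverse (exp s)" by (simp add: exp_minus)
  also have "\<dots> \<le> inverse (1 + s)" using assms exp_ge_add_one_self[of s] by (intro le_imp_inverse_le) auto
  finally show ?thesis using assms by (simp add: field_simps)
qed

lemma abs_mult_ln_le:
  fixes s b :: real
  assumes "0 < s" "s \<le> b" "1 < b"
  shows "s * \<bar>ln s\<bar> \<le> 1 + b * b"
proof (cases "s \<le> 1")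
  case True
  have "- ln s \<le> 1 / s - 1" using assms ln_le_minus_one[of "1 / s"] by (simp add: ln_div)
  then have "\<bar>ln s\<bar> \<le> 1 / s" using True assms by simp
  then have "s * \<bar>ln s\<bar> \<le> 1" using assms by (simp add: field_simps)
  then show ?thesis by (simp add: add_increasing2)
next
  case False
  then have "\<bar>ln s\<bar> \<le> b" using assms ln_le_minus_one[of s] by simp
  then have "s * \<bar>ln s\<bar> \<le> b * b" using assms by (intro mult_mono) auto
  then show ?thesis by simp
qed

definition abs_ge_set :: "'a measure \<Rightarrow> ('a \<Rightarrow> real) \<Rightarrow> real \<Rightarrow> 'a set" where
  "abs_ge_set M \<xi> x = {\<omega>\<in>space M. x \<le> \<bar>\<xi> \<omega>\<bar>}"

lemma sets_abs_ge_set: "\<xi> \<in> borel_measurable M \<Longrightarrow> abs_ge_set M \<xi> x \<in> sets M"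
  unfolding abs_ge_set_def by measurable

lemma abs_ge_set_eq_Un:
  "abs_ge_set M \<xi> x = {\<omega>\<in>space M. \<xi> \<omega> \<ge> x} \<union> {\<omega>\<in>space M. \<xi> \<omega> \<le> - x}"
  unfolding abs_ge_set_def by auto

lemma (in finite_measure) tail_fun_le_measure_abs_ge_set:
  assumes "\<xi> \<in> borel_measurable M"
  shows "tail_fun M \<xi> x \<le> measure M (abs_ge_set M \<xi> x)"
  unfolding tail_fun_def abs_ge_set_eq_Un using assms by (auto intro!: finite_measure_mono)

lemma (in finite_measure) measure_abs_ge_set_le_tail_fun:
  assumes "\<xi> \<in> borel_measurable M"
  shows "measure M (abs_ge_set M \<xi> x) \<le> 2 * tail_fun M \<xi> x"
proof -
  have "measure M (abs_ge_set M \<xi> x)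
      \<le> measure M {\<omega>\<in>space M. \<xi> \<omega> \<ge> x} + measure M {\<omega>\<in>space M. \<xi> \<omega> \<le> - x}"
    unfolding abs_ge_set_eq_Un using assms by (intro measure_subadditive) auto
  then show ?thesis unfolding tail_fun_def by simp
qed

lemma (in prob_space) layer_sum_le_nn_integral_powr:
  assumes \<zeta>: "\<zeta> \<in> borel_measurable M" and p: "p > 0"
  shows "ennreal (\<Sum>k\<in>{m..<n}. (exp (real k * p) - exp ((real k - 1) * p)) * prob (abs_ge_set M \<zeta> (exp k)))
           \<le> (\<integral>\<^sup>+ \<omega>. ennreal (\<bar>\<zeta> \<omega>\<bar> powr p) \<partial>M)"
proof -
  define d where "d k = exp (real k * p) - exp ((real k - 1) * p)" for k :: nat
  define A where "A k = abs_ge_set M \<zeta> (exp k)" for k :: nat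
  have d: "d k \<ge> 0" for k unfolding d_def using p by simp
  have A: "A k \<in> sets M" for k unfolding A_def using \<zeta> by (rule sets_abs_ge_set)
  have "ennreal (\<Sum>k\<in>{m..<n}. d k * prob (A k)) = (\<Sum>k\<in>{m..<n}. ennreal (d k * prob (A k)))"
    using d by (intro sum_ennreal[symmetric]) simp
  also have "\<dots> = (\<Sum>k\<in>{m..<n}. \<integral>\<^sup>+ \<omega>. ennreal (d k) * indicator (A k) \<omega> \<partial>M)"
    using d A by (intro sum.cong) (simp_all add: nn_integral_cmult_indicator emeasure_eq_measure ennreal_mult)
  also have "\<dots> = (\<integral>\<^sup>+ \<omega>. (\<Sum>k\<in>{m..<n}. ennreal (d k) * indicator (A k) \<omega>) \<partial>M)"
    using A by (intro nn_integral_sum[symmetric]) auto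
  also have "\<dots> \<le> (\<integral>\<^sup>+ \<omega>. ennreal (\<bar>\<zeta> \<omega>\<bar> powr p) \<partial>M)"
  proof (rule nn_integral_mono)
    fix \<omega> assume "\<omega> \<in> space M"
    then have "(\<Sum>k\<in>{m..<n}. ennreal (d k) * indicator (A k) \<omega>)
        = (\<Sum>k\<in>{m..<n}. ennreal (if exp (real k) \<le> \<bar>\<zeta> \<omega>\<bar> then d k else 0))"
      by (intro sum.cong) (auto simp: A_def abs_ge_set_def indicator_def)
    also have "\<dots> = ennreal (\<Sum>k\<in>{m..<n}. if exp (real k) \<le> \<bar>\<zeta> \<omega>\<bar> then d k else 0)"
      using d by (intro sum_ennreal) auto
    also have "\<dots> \<le> ennreal (\<bar>\<zeta> \<omega>\<bar> powr p)"
      using sum_layer_increments_le_powr[OF p, of "\<bar>\<zeta> \<omega>\<bar>" m n] unfolding d_def by (intro ennreal_leI) simp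
    finally show "(\<Sum>k\<in>{m..<n}. ennreal (d k) * indicator (A k) \<omega>) \<le> ennreal (\<bar>\<zeta> \<omega>\<bar> powr p)" .
  qed
  finally show ?thesis unfolding d_def A_def .
qed

lemma (in prob_space) nn_integral_powr_le_layer_suminf:
  assumes \<zeta>: "\<zeta> \<in> borel_measurable M" and p: "p > 0"
  shows "(\<integral>\<^sup>+ \<omega>. ennreal (\<bar>\<zeta> \<omega>\<bar> powr p) \<partial>M)
           \<le> ennreal (exp (real K * p))
             + (\<Sum>k. ennreal ((if K \<le> k then exp ((real k + 1) * p) - exp (real k * p) else 0)
                               * prob (abs_ge_set M \<zeta> (exp k))))"
proof -
  define u where "u k = (if K \<le> k then exp ((real k + 1) * p) - exp (real k * p) else 0)" for k :: nat
  define A where "A k = abs_ge_set M \<zeta> (exp k)" for k :: nat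
  have u: "u k \<ge> 0" for k unfolding u_def using p by simp
  have A: "A k \<in> sets M" for k unfolding A_def using \<zeta> by (rule sets_abs_ge_set)
  have pointwise: "ennreal (\<bar>\<zeta> \<omega>\<bar> powr p) \<le> ennreal (exp (real K * p)) + (\<Sum>k. ennreal (u k) * indicator (A k) \<omega>)"
    if \<omega>: "\<omega> \<in> space M" for \<omega>
  proof -
    define x where "x = \<bar>\<zeta> \<omega>\<bar>"
    define d where "d = nat \<lceil>x\<rceil> + 1"
    have x: "x \<ge> 0" unfolding x_def by simp
    have "x < real (K + d)" unfolding d_def using le_of_int_ceiling[of x] x by linarith
    also have "\<dots> < exp (real (K + d))" using exp_ge_add_one_self[of "real (K + d)"] by linarith
    finally have "x powr p \<le> exp (real K * p)
        + (\<Sum>k\<in>{K..<K+d}. if exp (real k) \<le> x then exp ((real k + 1) * p) - exp (real k * p) else 0)"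
      using powr_le_sum_layer_increments[OF p x] by simp
    also have "(\<Sum>k\<in>{K..<K+d}. if exp (real k) \<le> x then exp ((real k + 1) * p) - exp (real k * p) else 0)
        = (\<Sum>k\<in>{K..<K+d}. u k * indicator (A k) \<omega>)"
      using \<omega> by (intro sum.cong) (auto simp: A_def abs_ge_set_def indicator_def u_def x_def)
    finally have "ennreal (x powr p) \<le> ennreal (exp (real K * p)) + ennreal (\<Sum>k\<in>{K..<K+d}. u k * indicator (A k) \<omega>)"
      using u by (subst ennreal_plus[symmetric]) (auto intro!: ennreal_leI sum_nonneg)
    also have "ennreal (\<Sum>k\<in>{K..<K+d}. u k * indicator (A k) \<omega>) = (\<Sum>k\<in>{K..<K+d}. ennreal (u k) * indicator (A k) \<omega>)"
      using u by (simp add: sum_ennreal[symmetric] ennreal_mult' del: sum_ennreal)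
    also have "(\<Sum>k\<in>{K..<K+d}. ennreal (u k) * indicator (A k) \<omega>) \<le> (\<Sum>k. ennreal (u k) * indicator (A k) \<omega>)"
      by (rule sum_le_suminf) auto
    finally show ?thesis unfolding x_def by (simp add: add_left_mono)
  qed
  have "(\<integral>\<^sup>+ \<omega>. ennreal (\<bar>\<zeta> \<omega>\<bar> powr p) \<partial>M)
     \<le> (\<integral>\<^sup>+ \<omega>. ennreal (exp (real K * p)) + (\<Sum>k. ennreal (u k) * indicator (A k) \<omega>) \<partial>M)"
    using pointwise by (intro nn_integral_mono) auto
  also have "\<dots> = ennreal (exp (real K * p)) + (\<Sum>k. \<integral>\<^sup>+ \<omega>. ennreal (u k) * indicator (A k) \<omega> \<partial>M)"
    using A by (subst nn_integral_add) (auto simp: nn_integral_suminf emeasure_space_1)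
  also have "(\<lambda>k. \<integral>\<^sup>+ \<omega>. ennreal (u k) * indicator (A k) \<omega> \<partial>M) = (\<lambda>k. ennreal (u k * prob (A k)))"
    using u A by (simp add: nn_integral_cmult_indicator emeasure_eq_measure ennreal_mult)
  finally show ?thesis unfolding u_def A_def .
qed

lemma obtain_block_length:
  fixes s b :: real and K :: nat
  assumes "0 < s" "s \<le> b - 1" "K \<ge> 1"
  obtains N :: nat where "K \<le> N" "1 / s \<le> real N" "s * real N \<le> real K * b"
proof
  define n where "n = nat \<lceil>1 / s\<rceil>"
  have n_ge: "1 / s \<le> real n" and n_le: "real n \<le> 1 / s + 1"
    unfolding n_def using assms(1) ceiling_correct[of "1 / s"] by auto
  then have "0 < real n" using assms(1) by (meson divide_pos_pos less_le_trans zero_less_one)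
  then show "K \<le> K * n" by simp
  have "1 * real n \<le> real K * real n" using assms(3) by (intro mult_right_mono) auto
  then have "real n \<le> real (K * n)" by simp
  then show "1 / s \<le> real (K * n)" using n_ge by linarith
  have "s * real n \<le> s * (1 / s + 1)" using n_le assms(1) by (intro mult_left_mono) auto
  also have "\<dots> = 1 + s" using assms(1) by (simp add: field_simps)
  also have "\<dots> \<le> b" using assms(2) by simp
  finally show "s * real (K * n) \<le> real K * b"
    using mult_left_mono[of "s * real n" b "real K"] by (simp add: mult_ac)
qed

lemma powr_exponent_change_bounds:
  fixes b p G :: real
  assumes "1 < b" "1 \<le> p" "p < b" "G > 0"
  shows "exp (- (G * (1 + b * b))) * (b - p) powr (- G / b) \<le> (b - p) powr (- G / p)"
    and "(b - p) powr (- G / p) \<le> exp (G * (1 + b * b)) * (b - p) powr (- G / b)"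
proof -
  define s where "s = b - p"
  define t where "t = G / p - G / b"
  have s: "0 < s" "s \<le> b" using assms unfolding s_def by auto
  have "t = G * s / (p * b)" unfolding t_def s_def using assms by (simp add: field_simps)
  moreover have "1 * 1 \<le> p * b" using assms by (intro mult_mono) auto
  ultimately have t: "0 \<le> t" "t \<le> G * s" using assms s by (auto simp: divide_le_eq)
  then have "t * \<bar>ln s\<bar> \<le> G * (s * \<bar>ln s\<bar>)"
    using mult_right_mono[OF t(2), of "\<bar>ln s\<bar>"] by (simp add: mult.assoc)
  also have "\<dots> \<le> G * (1 + b * b)" using abs_mult_ln_le[OF s assms(1)] assms by simp
  finally have "\<bar>- t * ln s\<bar> \<le> G * (1 + b * b)" using t by (simp add: abs_mult)
  then have bounds: "exp (- (G * (1 + b * b))) \<le> exp (- t * ln s)" "exp (- t * ln s) \<le> exp (G * (1 + b * b))"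
    by simp_all
  have eq: "s powr (- G / p) = exp (- t * ln s) * s powr (- G / b)"
    using s by (simp add: t_def powr_def exp_add[symmetric] algebra_simps diff_divide_distrib)
  show "exp (- (G * (1 + b * b))) * (b - p) powr (- G / b) \<le> (b - p) powr (- G / p)"
    unfolding s_def[symmetric] eq by (rule mult_right_mono[OF bounds(1)]) simp
  show "(b - p) powr (- G / p) \<le> exp (G * (1 + b * b)) * (b - p) powr (- G / b)"
    unfolding s_def[symmetric] eq by (rule mult_right_mono[OF bounds(2)]) simp
qed

lemma lp_norm_bounds_of_moment_bounds:
  fixes f :: "'a \<Rightarrow> real"
  assumes p: "1 \<le> p" and c: "0 < c" "c \<le> 1" and C: "1 \<le> C" and t: "0 \<le> t"
    and lower: "ennreal (c * t) \<le> (\<integral>\<^sup>+ \<omega>. ennreal (\<bar>f \<omega>\<bar> powr p) \<partial>M)"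
    and upper: "(\<integral>\<^sup>+ \<omega>. ennreal (\<bar>f \<omega>\<bar> powr p) \<partial>M) \<le> ennreal (C * t)"
  shows "ennreal (c * t powr (1 / p)) \<le> lp_norm M p f"
    and "lp_norm M p f \<le> ennreal (C * t powr (1 / p))"
proof -
  define m where "m = (\<integral>\<^sup>+ \<omega>. ennreal (\<bar>f \<omega>\<bar> powr p) \<partial>M)"
  have "m < \<top>" using upper unfolding m_def by (simp add: le_less_trans)
  then obtain r where m: "m = ennreal r" and r: "0 \<le> r" by (cases m) auto
  have r_ge: "c * t \<le> r" and r_le: "r \<le> C * t"
    using lower upper c C t r unfolding m_def[symmetric] m by (auto simp: ennreal_le_iff)
  have lp: "lp_norm M p f = ennreal (r powr (1 / p))"
    unfolding lp_norm_def Let_def m_def[symmetric] m using r by simp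
  have exponent: "0 \<le> 1 / p" "1 / p \<le> 1" using p by auto
  have "c powr 1 \<le> c powr (1 / p)" using c exponent by (intro powr_mono') auto
  then have "c * t powr (1 / p) \<le> c powr (1 / p) * t powr (1 / p)"
    using c by (intro mult_right_mono) auto
  also have "\<dots> = (c * t) powr (1 / p)" using c t by (simp add: powr_mult)
  also have "\<dots> \<le> r powr (1 / p)" using r_ge c t exponent by (intro powr_mono2) auto
  finally show "ennreal (c * t powr (1 / p)) \<le> lp_norm M p f" unfolding lp by (rule ennreal_leI)
  have "r powr (1 / p) \<le> (C * t) powr (1 / p)" using r_le r exponent by (intro powr_mono2) auto
  also have "\<dots> = C powr (1 / p) * t powr (1 / p)" using C t by (simp add: powr_mult)
  also have "\<dots> \<le> C * t powr (1 / p)"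
  proof -
    have "C powr (1 / p) \<le> C powr 1" using C exponent by (intro powr_mono) auto
    then show ?thesis using C by (intro mult_right_mono) auto
  qed
  finally show "lp_norm M p f \<le> ennreal (C * t powr (1 / p))" unfolding lp by (rule ennreal_leI)
qed

lemma gls_space_if_lp_norm_le:
  assumes "f \<in> borel_measurable M" and c: "0 \<le> c"
    and \<psi>: "\<And>p. p \<in> {1..<b} \<Longrightarrow> 0 < \<psi> p"
    and le: "\<And>p. p \<in> {1..<b} \<Longrightarrow> lp_norm M p f \<le> ennreal (c * \<psi> p)"
  shows "f \<in> gls_space M b \<psi>"
proof -
  have "gls_norm M b \<psi> f \<le> ennreal c"
    unfolding gls_norm_def
  proof (rule SUP_least)
    fix p assume p: "p \<in> {1..<b}"
    have "lp_norm M p f / ennreal (\<psi> p) \<le> ennreal (c * \<psi> p) / ennreal (\<psi> p)"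
      using le[OF p] by (rule divide_right_mono_ennreal)
    also have "\<dots> = ennreal c" using \<psi>[OF p] c by (simp add: divide_ennreal)
    finally show "lp_norm M p f / ennreal (\<psi> p) \<le> ennreal c" .
  qed
  then show ?thesis unfolding gls_space_def using assms(1) by (simp add: le_less_trans)
qed

lemma gls_norm_psi_bd_eq_top:
  assumes b: "1 < b" and c: "0 < c" and \<delta>: "\<delta>' < \<delta>"
    and ge: "\<And>p. p \<in> {1..<b} \<Longrightarrow> ennreal (c * (b - p) powr (- \<delta> / b)) \<le> lp_norm M p f"
  shows "gls_norm M b (psi_bd b \<delta>') f = \<top>"
  unfolding gls_norm_def SUP_eq_top_iff
proof (intro allI impI)
  fix x :: ennreal assume "x < \<top>"
  then obtain r where r: "0 \<le> r" and x: "x = ennreal r" by (cases x) auto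
  define \<epsilon> where "\<epsilon> = \<delta> - \<delta>'"
  define A where "A = 1 + r / c"
  define s where "s = min (b - 1) (A powr (- b / \<epsilon>))"
  have \<epsilon>: "\<epsilon> > 0" unfolding \<epsilon>_def using \<delta> by simp
  have A: "A \<ge> 1" unfolding A_def using r c by simp
  have s: "0 < s" "s \<le> b - 1" "s \<le> A powr (- b / \<epsilon>)" unfolding s_def using b A by auto
  have p: "b - s \<in> {1..<b}" using s by auto
  have "A = (A powr (- b / \<epsilon>)) powr (- \<epsilon> / b)" using A b \<epsilon> by (simp add: powr_powr)
  also have "\<dots> \<le> s powr (- \<epsilon> / b)" using s b \<epsilon> by (intro powr_mono2') auto
  finally have A_le: "A \<le> s powr (- \<epsilon> / b)" .
  have "r < c * A" unfolding A_def using c by (simp add: distrib_left)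
  also have "\<dots> \<le> c * s powr (- \<epsilon> / b)" using A_le c by simp
  also have "- \<epsilon> / b = - \<delta> / b - - \<delta>' / b" unfolding \<epsilon>_def by (simp add: diff_divide_distrib)
  also have "c * s powr (- \<delta> / b - - \<delta>' / b) = c * s powr (- \<delta> / b) / psi_bd b \<delta>' (b - s)"
  proof -
    have "psi_bd b \<delta>' (b - s) = s powr (- \<delta>' / b)" unfolding psi_bd_def by simp
    then show ?thesis by (simp only: powr_diff times_divide_eq_right)
  qed
  finally have "x < ennreal (c * s powr (- \<delta> / b)) / ennreal (psi_bd b \<delta>' (b - s))"
    unfolding x using r c s by (simp add: divide_ennreal psi_bd_def ennreal_less_iff)
  also have "\<dots> \<le> lp_norm M (b - s) f / ennreal (psi_bd b \<delta>' (b - s))"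
    using ge[OF p] by (intro divide_right_mono_ennreal) simp
  finally show "\<exists>p\<in>{1..<b}. x < lp_norm M p f / ennreal (psi_bd b \<delta>' p)" using p by blast
qed

locale log_power_tail = prob_space +
  fixes \<zeta> :: "'a \<Rightarrow> real" and b \<gamma> :: real and K :: nat
  assumes measurable_\<zeta>: "\<zeta> \<in> borel_measurable M"
    and b_gt_1: "b > 1" and \<gamma>_pos: "\<gamma> > 0" and K_pos: "K \<ge> 1"
    and layer_prob_ge: "\<And>k. K \<le> k \<Longrightarrow> exp (- b * k) * k powr \<gamma> \<le> prob (abs_ge_set M \<zeta> (exp k))"
    and layer_prob_le: "\<And>k. K \<le> k \<Longrightarrow> prob (abs_ge_set M \<zeta> (exp k)) \<le> 2 * (exp (- b * k) * k powr \<gamma>)"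
begin

lemma layer_term_ge:
  assumes p: "1 \<le> p" "p < b" and k: "K \<le> k"
  shows "(1 - exp (-1)) * (exp (- (b - p) * k) * k powr \<gamma>)
           \<le> (exp (real k * p) - exp ((real k - 1) * p)) * prob (abs_ge_set M \<zeta> (exp k))"
proof -
  have "exp ((real k - 1) * p) = exp (real k * p) * exp (- p)" by (simp add: exp_add[symmetric] algebra_simps)
  moreover have "exp (- p) \<le> exp (-1)" using p by simp
  ultimately have increment: "(1 - exp (-1)) * exp (real k * p) \<le> exp (real k * p) - exp ((real k - 1) * p)"
    by (simp add: algebra_simps)
  have "0 \<le> exp (real k * p) - exp ((real k - 1) * p)" using p by (simp add: algebra_simps)
  then have "(1 - exp (-1)) * exp (real k * p) * (exp (- b * k) * k powr \<gamma>)
      \<le> (exp (real k * p) - exp ((real k - 1) * p)) * prob (abs_ge_set M \<zeta> (exp k))"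
    using increment layer_prob_ge[OF k] by (intro mult_mono) auto
  moreover have "exp (real k * p) * exp (- b * k) = exp (- (b - p) * k)"
    by (simp add: mult_exp_exp algebra_simps)
  ultimately show ?thesis by (metis mult.assoc)
qed

lemma moment_lower_bound:
  assumes p: "1 \<le> p" "p < b"
  shows "ennreal ((1 - exp (-1)) * exp (- 2 * real K * b) * (b - p) powr (- (\<gamma> + 1)))
           \<le> (\<integral>\<^sup>+ \<omega>. ennreal (\<bar>\<zeta> \<omega>\<bar> powr p) \<partial>M)"
proof -
  define s where "s = b - p"
  define c where "c = 1 - exp (-1::real)"
  have s: "0 < s" "s \<le> b - 1" using p unfolding s_def by auto
  have c: "c > 0" unfolding c_def by simp
  obtain N where N: "K \<le> N" "1 / s \<le> real N" "s * real N \<le> real K * b"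
    using obtain_block_length[OF s K_pos] .
  have N_pos: "real N > 0" using N(2) s by (meson divide_pos_pos less_le_trans zero_less_one)
  have "s powr (- (\<gamma> + 1)) = (1 / s) powr (\<gamma> + 1)" by (simp only: powr_minus inverse_powr divide_inverse mult_1)
  also have "\<dots> \<le> real N powr (\<gamma> + 1)" using N(2) s \<gamma>_pos by (intro powr_mono2) auto
  also have "\<dots> = real N * real N powr \<gamma>" using N_pos by (simp add: powr_add)
  finally have "c * exp (- 2 * real K * b) * s powr (- (\<gamma> + 1))
      \<le> c * exp (- 2 * s * N) * (real N * real N powr \<gamma>)"
    using N(3) c by (intro mult_mono) auto
  also have "\<dots> = (\<Sum>k\<in>{N..<2*N}. c * (exp (- 2 * s * N) * real N powr \<gamma>))" by (simp add: mult_ac)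
  also have "\<dots> \<le> (\<Sum>k\<in>{N..<2*N}. c * (exp (- s * k) * k powr \<gamma>))"
    using s c \<gamma>_pos by (intro sum_mono mult_left_mono mult_mono powr_mono2) auto
  also have "\<dots> \<le> (\<Sum>k\<in>{N..<2*N}. (exp (real k * p) - exp ((real k - 1) * p)) * prob (abs_ge_set M \<zeta> (exp k)))"
    using layer_term_ge[OF p] N(1) unfolding c_def s_def by (intro sum_mono) auto
  finally have "ennreal (c * exp (- 2 * real K * b) * s powr (- (\<gamma> + 1)))
      \<le> ennreal (\<Sum>k\<in>{N..<2*N}. (exp (real k * p) - exp ((real k - 1) * p)) * prob (abs_ge_set M \<zeta> (exp k)))"
    by (rule ennreal_leI)
  also have "\<dots> \<le> (\<integral>\<^sup>+ \<omega>. ennreal (\<bar>\<zeta> \<omega>\<bar> powr p) \<partial>M)"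
    using p by (intro layer_sum_le_nn_integral_powr measurable_\<zeta>) simp
  finally show ?thesis unfolding c_def s_def .
qed

lemma layer_term_le:
  assumes p: "1 \<le> p" "p < b"
  shows "(if K \<le> k then exp ((real k + 1) * p) - exp (real k * p) else 0) * prob (abs_ge_set M \<zeta> (exp k))
           \<le> 2 * exp b * (2 * \<gamma> / (b - p)) powr \<gamma> * exp (- (b - p) / 2) ^ k"
proof (cases "K \<le> k")
  case False
  then show ?thesis by simp
next
  case True
  define s where "s = b - p"
  have s: "s > 0" using p unfolding s_def by simp
  have k: "real k > 0" using True K_pos by simp
  have "exp ((real k + 1) * p) = exp p * exp (real k * p)" by (simp add: exp_add[symmetric] algebra_simps)
  moreover have "exp (real k * p) \<le> exp p * exp (real k * p)" using p by simp
  moreover have "0 < exp (real k * p)" by simp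
  moreover have "exp p * exp (real k * p) \<le> exp b * exp (real k * p)" using p by (intro mult_right_mono) auto
  ultimately have increment: "0 \<le> exp ((real k + 1) * p) - exp (real k * p)"
      "exp ((real k + 1) * p) - exp (real k * p) \<le> exp b * exp (real k * p)"
    by linarith+
  have "(exp ((real k + 1) * p) - exp (real k * p)) * prob (abs_ge_set M \<zeta> (exp k))
      \<le> exp b * exp (real k * p) * (2 * (exp (- b * k) * k powr \<gamma>))"
    using increment layer_prob_le[OF True] by (intro mult_mono) auto
  also have "\<dots> = 2 * exp b * (k powr \<gamma> * exp (- (s / 2) * k)) * exp (- (s / 2) * k)"
    unfolding s_def by (simp add: mult_exp_exp algebra_simps)
  also have "\<dots> \<le> 2 * exp b * (2 * \<gamma> / s) powr \<gamma> * exp (- (s / 2) * k)"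
    using powr_mult_exp_le[OF k _ \<gamma>_pos, of "s / 2"] s by (intro mult_right_mono mult_left_mono) (auto simp: mult.commute)
  also have "exp (- (s / 2) * k) = exp (- s / 2) ^ k"
    by (simp add: exp_of_nat_mult[symmetric] mult.commute)
  finally show ?thesis using True unfolding s_def by simp
qed

lemma layer_suminf_le:
  assumes p: "1 \<le> p" "p < b"
  shows "(\<Sum>k. ennreal ((if K \<le> k then exp ((real k + 1) * p) - exp (real k * p) else 0)
                          * prob (abs_ge_set M \<zeta> (exp k))))
           \<le> ennreal (4 * exp b * (1 + b) * (2 * \<gamma>) powr \<gamma> * (b - p) powr (- (\<gamma> + 1)))"
proof -
  define s where "s = b - p"
  define q where "q = exp (- s / 2)"
  define D where "D = 2 * exp b * (2 * \<gamma> / s) powr \<gamma>"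
  have s: "0 < s" "s \<le> b - 1" using p unfolding s_def by auto
  have q: "0 < q" "q < 1" unfolding q_def using s by auto
  have D: "D \<ge> 0" unfolding D_def by simp
  have "(\<Sum>k. ennreal ((if K \<le> k then exp ((real k + 1) * p) - exp (real k * p) else 0)
                        * prob (abs_ge_set M \<zeta> (exp k))))
      \<le> (\<Sum>k. ennreal (D * q ^ k))"
    using layer_term_le[OF p] unfolding D_def q_def s_def by (intro suminf_le ennreal_leI) auto
  also have "\<dots> = ennreal (D / (1 - q))"
    using D q by (simp add: suminf_ennreal2 summable_geometric suminf_mult suminf_geometric
                            summable_mult divide_inverse)
  also have "\<dots> \<le> ennreal (4 * exp b * (1 + b) * (2 * \<gamma>) powr \<gamma> * s powr (- (\<gamma> + 1)))"
  proof (rule ennreal_leI)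
    have "1 / (1 - q) \<le> (1 + s / 2) / (s / 2)"
      using one_minus_exp_minus_ge[of "s / 2"] s q unfolding q_def by (simp add: field_simps)
    also have "\<dots> \<le> 2 * (1 + b) / s" using s by (simp add: field_simps)
    finally have "D / (1 - q) \<le> D * (2 * (1 + b) / s)"
      using D by (metis mult_left_mono times_divide_eq_right mult_1_right)
    also have "(2 * \<gamma> / s) powr \<gamma> = (2 * \<gamma>) powr \<gamma> * s powr (- \<gamma>)"
      by (subst powr_divide) (use s \<gamma>_pos in \<open>auto simp: powr_minus divide_inverse\<close>)
    then have "D * (2 * (1 + b) / s) = 4 * exp b * (1 + b) * (2 * \<gamma>) powr \<gamma> * (s powr (- \<gamma>) * s powr (- 1))"
      unfolding D_def using s by (simp add: powr_minus_divide)
    also have "s powr (- \<gamma>) * s powr (- 1) = s powr (- (\<gamma> + 1))"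
      by (subst powr_add[symmetric]) (simp add: algebra_simps)
    finally show "D / (1 - q) \<le> 4 * exp b * (1 + b) * (2 * \<gamma>) powr \<gamma> * s powr (- (\<gamma> + 1))" .
  qed
  finally show ?thesis unfolding s_def .
qed

lemma moment_upper_bound:
  assumes p: "1 \<le> p" "p < b"
  shows "(\<integral>\<^sup>+ \<omega>. ennreal (\<bar>\<zeta> \<omega>\<bar> powr p) \<partial>M)
           \<le> ennreal ((exp (real K * b) * (b - 1) powr (\<gamma> + 1) + 4 * exp b * (1 + b) * (2 * \<gamma>) powr \<gamma>)
                      * (b - p) powr (- (\<gamma> + 1)))"
proof -
  define t where "t = (b - p) powr (- (\<gamma> + 1))"
  define B where "B = 4 * exp b * (1 + b) * (2 * \<gamma>) powr \<gamma>"
  have B: "0 \<le> B * t" unfolding B_def t_def using b_gt_1 by simp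
  have "(b - p) powr (\<gamma> + 1) \<le> (b - 1) powr (\<gamma> + 1)" using p \<gamma>_pos by (intro powr_mono2) auto
  then have "1 \<le> (b - 1) powr (\<gamma> + 1) / (b - p) powr (\<gamma> + 1)" using p by (simp add: le_divide_eq)
  then have ratio: "1 \<le> (b - 1) powr (\<gamma> + 1) * t" unfolding t_def by (simp only: powr_minus divide_inverse)
  have "exp (real K * p) \<le> exp (real K * b)" using p by (simp add: mult_left_mono)
  also have "\<dots> \<le> exp (real K * b) * ((b - 1) powr (\<gamma> + 1) * t)" using ratio by simp
  finally have exp_Kp: "exp (real K * p) + B * t \<le> (exp (real K * b) * (b - 1) powr (\<gamma> + 1) + B) * t"
    by (simp add: distrib_right mult.assoc)
  have "(\<integral>\<^sup>+ \<omega>. ennreal (\<bar>\<zeta> \<omega>\<bar> powr p) \<partial>M)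
      \<le> ennreal (exp (real K * p)) + (\<Sum>k. ennreal ((if K \<le> k then exp ((real k + 1) * p) - exp (real k * p) else 0)
                                                   * prob (abs_ge_set M \<zeta> (exp k))))"
    using p by (intro nn_integral_powr_le_layer_suminf measurable_\<zeta>) simp
  also have "\<dots> \<le> ennreal (exp (real K * p)) + ennreal (B * t)"
    using layer_suminf_le[OF p] unfolding B_def t_def by (rule add_left_mono)
  also have "\<dots> = ennreal (exp (real K * p) + B * t)" using B by (intro ennreal_plus[symmetric]) auto
  also have "\<dots> \<le> ennreal ((exp (real K * b) * (b - 1) powr (\<gamma> + 1) + B) * t)"
    using exp_Kp by (rule ennreal_leI)
  finally show ?thesis unfolding B_def t_def .
qed

lemma moment_comparable:
  obtains c C where "0 < c" "c \<le> 1" "1 \<le> C"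
    and "\<And>p. 1 \<le> p \<Longrightarrow> p < b \<Longrightarrow>
           ennreal (c * (b - p) powr (- (\<gamma> + 1))) \<le> (\<integral>\<^sup>+ \<omega>. ennreal (\<bar>\<zeta> \<omega>\<bar> powr p) \<partial>M)"
    and "\<And>p. 1 \<le> p \<Longrightarrow> p < b \<Longrightarrow>
           (\<integral>\<^sup>+ \<omega>. ennreal (\<bar>\<zeta> \<omega>\<bar> powr p) \<partial>M) \<le> ennreal (C * (b - p) powr (- (\<gamma> + 1)))"
proof
  define c where "c = (1 - exp (-1)) * exp (- 2 * real K * b)"
  define C where "C = exp (real K * b) * (b - 1) powr (\<gamma> + 1) + 4 * exp b * (1 + b) * (2 * \<gamma>) powr \<gamma>"
  show "0 < min c 1" "min c 1 \<le> 1" "1 \<le> max C 1" unfolding c_def by auto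
  fix p assume p: "1 \<le> p" "p < b"
  have "ennreal (min c 1 * (b - p) powr (- (\<gamma> + 1))) \<le> ennreal (c * (b - p) powr (- (\<gamma> + 1)))"
    by (intro ennreal_leI mult_right_mono) auto
  also have "\<dots> \<le> (\<integral>\<^sup>+ \<omega>. ennreal (\<bar>\<zeta> \<omega>\<bar> powr p) \<partial>M)"
    using moment_lower_bound[OF p] unfolding c_def .
  finally show "ennreal (min c 1 * (b - p) powr (- (\<gamma> + 1))) \<le> (\<integral>\<^sup>+ \<omega>. ennreal (\<bar>\<zeta> \<omega>\<bar> powr p) \<partial>M)" .
  have "(\<integral>\<^sup>+ \<omega>. ennreal (\<bar>\<zeta> \<omega>\<bar> powr p) \<partial>M) \<le> ennreal (C * (b - p) powr (- (\<gamma> + 1)))"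
    using moment_upper_bound[OF p] unfolding C_def .
  also have "\<dots> \<le> ennreal (max C 1 * (b - p) powr (- (\<gamma> + 1)))"
    by (intro ennreal_leI mult_right_mono) auto
  finally show "(\<integral>\<^sup>+ \<omega>. ennreal (\<bar>\<zeta> \<omega>\<bar> powr p) \<partial>M) \<le> ennreal (max C 1 * (b - p) powr (- (\<gamma> + 1)))" .
qed

lemma lp_norm_comparable:
  "\<exists>c1 c2. 0 < c1 \<and> 0 < c2 \<and>
     (\<forall>p\<in>{1..<b}. ennreal (c1 * (b - p) powr (- (\<gamma> + 1) / b)) \<le> lp_norm M p \<zeta> \<and>
                   lp_norm M p \<zeta> \<le> ennreal (c2 * (b - p) powr (- (\<gamma> + 1) / b)))"
proof -
  define G where "G = \<gamma> + 1"
  define E where "E = exp (G * (1 + b * b))"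
  have G: "G > 0" unfolding G_def using \<gamma>_pos by simp
  obtain c C where c: "0 < c" "c \<le> 1" and C: "1 \<le> C"
    and lower: "\<And>p. 1 \<le> p \<Longrightarrow> p < b \<Longrightarrow> ennreal (c * (b - p) powr (- G)) \<le> (\<integral>\<^sup>+ \<omega>. ennreal (\<bar>\<zeta> \<omega>\<bar> powr p) \<partial>M)"
    and upper: "\<And>p. 1 \<le> p \<Longrightarrow> p < b \<Longrightarrow> (\<integral>\<^sup>+ \<omega>. ennreal (\<bar>\<zeta> \<omega>\<bar> powr p) \<partial>M) \<le> ennreal (C * (b - p) powr (- G))"
    using moment_comparable unfolding G_def by metis
  have "ennreal (c / E * (b - p) powr (- G / b)) \<le> lp_norm M p \<zeta>
      \<and> lp_norm M p \<zeta> \<le> ennreal (C * E * (b - p) powr (- G / b))"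
    if "p \<in> {1..<b}" for p
  proof -
    have p: "1 \<le> p" "p < b" using that by auto
    have root: "((b - p) powr (- G)) powr (1 / p) = (b - p) powr (- G / p)" by (simp add: powr_powr)
    note lp = lp_norm_bounds_of_moment_bounds[OF p(1) c C powr_ge_zero lower[OF p] upper[OF p], unfolded root]
    have "ennreal (c / E * (b - p) powr (- G / b)) \<le> ennreal (c * (b - p) powr (- G / p))"
      using powr_exponent_change_bounds(1)[OF b_gt_1 p G] c
      by (intro ennreal_leI) (simp add: E_def exp_minus divide_inverse mult.assoc mult_left_mono)
    also note lp(1)
    finally have ge: "ennreal (c / E * (b - p) powr (- G / b)) \<le> lp_norm M p \<zeta>" .
    have "ennreal (C * (b - p) powr (- G / p)) \<le> ennreal (C * E * (b - p) powr (- G / b))"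
      using powr_exponent_change_bounds(2)[OF b_gt_1 p G] C
      by (intro ennreal_leI) (simp add: E_def mult.assoc mult_left_mono)
    with lp(2) have "lp_norm M p \<zeta> \<le> ennreal (C * E * (b - p) powr (- G / b))"
      by (rule order_trans)
    with ge show ?thesis ..
  qed
  moreover have "0 < c / E" "0 < C * E" using c C unfolding E_def by auto
  ultimately show ?thesis unfolding G_def by blast
qed

end

theorem mainTheorem2:
  fixes M :: "'a measure" and \<zeta> :: "'a \<Rightarrow> real" and b \<gamma> x0 :: real
  assumes "prob_space M"
    and "\<zeta> \<in> borel_measurable M"
    and "b > 1" and "\<gamma> > 0" and "x0 \<ge> exp 1"
    and "\<forall>x\<ge>x0. tail_fun M \<zeta> x = x powr (- b) * (ln x) powr \<gamma>"
  shows "(\<exists>c1 c2. 0 < c1 \<and> 0 < c2 \<and>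
            (\<forall>p\<in>{1..<b}. ennreal (c1 * (b - p) powr (- (\<gamma> + 1) / b)) \<le> lp_norm M p \<zeta> \<and>
                          lp_norm M p \<zeta> \<le> ennreal (c2 * (b - p) powr (- (\<gamma> + 1) / b))))
         \<and> \<zeta> \<in> gls_space M b (psi_bd b (\<gamma> + 1))
         \<and> gls_norm M b (psi_bd b \<gamma>) \<zeta> = \<top>"
proof -
  interpret prob_space M by (fact assms(1))
  define K where "K = nat \<lceil>ln x0\<rceil>"
  have "0 < x0" using assms(5) exp_gt_zero[of 1] by linarith
  then have "1 \<le> ln x0" using assms(5) by (metis ln_exp ln_le_cancel_iff exp_gt_zero)
  then have K: "1 \<le> K" "ln x0 \<le> real K" unfolding K_def by linarith+
  have tail_at_exp: "tail_fun M \<zeta> (exp k) = exp (- b * k) * k powr \<gamma>" if "K \<le> k" for k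
  proof -
    have "ln x0 \<le> ln (exp k)" using K(2) that by simp
    then have "x0 \<le> exp k" using \<open>0 < x0\<close> ln_le_cancel_iff[of x0 "exp k"] by simp
    then show ?thesis using assms(6) by (simp add: powr_def mult.commute)
  qed
  have "log_power_tail M \<zeta> b \<gamma> K"
  proof (intro log_power_tail.intro log_power_tail_axioms.intro)
    fix k :: nat assume "K \<le> k"
    show "exp (- b * k) * k powr \<gamma> \<le> prob (abs_ge_set M \<zeta> (exp k))"
      using tail_fun_le_measure_abs_ge_set[OF assms(2)] tail_at_exp[OF \<open>K \<le> k\<close>] by metis
    show "prob (abs_ge_set M \<zeta> (exp k)) \<le> 2 * (exp (- b * k) * k powr \<gamma>)"
      using measure_abs_ge_set_le_tail_fun[OF assms(2)] tail_at_exp[OF \<open>K \<le> k\<close>] by metis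
  qed (use assms K in auto)
  then obtain c1 c2 where c: "0 < c1" "0 < c2"
    and bounds: "\<forall>p\<in>{1..<b}. ennreal (c1 * (b - p) powr (- (\<gamma> + 1) / b)) \<le> lp_norm M p \<zeta> \<and>
                             lp_norm M p \<zeta> \<le> ennreal (c2 * (b - p) powr (- (\<gamma> + 1) / b))"
    using log_power_tail.lp_norm_comparable by blast
  have "\<zeta> \<in> gls_space M b (psi_bd b (\<gamma> + 1))"
    using assms(2) c(2) bounds by (intro gls_space_if_lp_norm_le[of _ _ c2]) (auto simp: psi_bd_def)
  moreover have "gls_norm M b (psi_bd b \<gamma>) \<zeta> = \<top>"
    using bounds by (intro gls_norm_psi_bd_eq_top[OF assms(3) c(1), of \<gamma> "\<gamma> + 1"]) auto
  ultimately show ?thesis using c bounds by blast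
qed

end
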